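(* Let $(U,g_1)$ have constant curvature $K_1$ and $(V,g_2)$ be flat, and let $f$ be a function on $U$. Suppose $u^1,\dots,u^p$ are functions on $U$ with $g_1^*(du^i,du^j)=G_1^{ij}-K_1u^iu^j$ for a constant nondegenerate matrix $G_1$, that $f=u^1$, that $G_1^{1j}=0$ for all $j\ne p$ and $G_1^{1p}=b\neq0$, and that $g_1^*(df,df)=-K_1f^2$. Suppose $v^1,\dots,v^{n_2}$ are functions on $V$ with $g_2^*(dv^k,dv^m)=G_2^{km}$ constant and nondegenerate, and $\phi$ is a function on $V$ with $g_2^*(d\phi,dv^i)=v^i$ for all $i$ and $g_2^*(d\phi,d\phi)=2\phi$. Let $g=g_1+f^{-2}g_2$ on $U\times V$ (contravariant warped product). Then the functions $w=(u^1,\dots,u^{p-1},\ \tilde u^p,\ fv^1,\dots,fv^{n_2})$ with $\tilde u^p=u^p-b\,f\phi$ satisfy $g^*(dw^a,dw^b)=G^{ab}-K_1w^aw^b$ with $G=\begin{pmatrix}G_1&0\\0&G_2\end{pmatrix}$; in particular they form (generalised) flat coordinates for $g$.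
   Context: $g_1,g_2$ are treated as contravariant metrics and $g^*$ (resp. $g_i^*$) denotes the pairing of covectors; functions on $U$ or $V$ are pulled back to $U\times V$. The contravariant metric $g_1+f^{-2}g_2$ acts on covectors by $g^*(\omega,\eta)=g_1^*(\omega_U,\eta_U)+f^{-2}g_2^*(\omega_V,\eta_V)$. *)

theory Defs
  imports "HOL-Analysis.Analysis"
begin

text \<open>Local coordinates: a manifold chart is an open set of real^'n.
  A contravariant metric is a matrix-valued function g with g x $ i $ j = g^{ij}(x).\<close>

definition partial :: "'n::finite \<Rightarrow> (real^'n \<Rightarrow> real) \<Rightarrow> real^'n \<Rightarrow> real" where
  "partial i h x = frechet_derivative h (at x) (axis i 1)"

definition dcov :: "(real^'n::finite \<Rightarrow> real) \<Rightarrow> real^'n \<Rightarrow> real^'n" where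
  "dcov h x = (\<chi> i. partial i h x)"

definition pair_cov :: "(real^'n::finite \<Rightarrow> real^'n^'n) \<Rightarrow> real^'n \<Rightarrow> real^'n \<Rightarrow> real^'n \<Rightarrow> real" where
  "pair_cov g x \<omega> \<eta> = (\<Sum>i\<in>UNIV. \<Sum>j\<in>UNIV. g x $ i $ j * \<omega> $ i * \<eta> $ j)"

fun partials_iter :: "'n::finite list \<Rightarrow> (real^'n \<Rightarrow> real) \<Rightarrow> real^'n \<Rightarrow> real" where
  "partials_iter [] h = h"
| "partials_iter (i # is) h = partial i (partials_iter is h)"

definition smooth_on :: "(real^'n::finite) set \<Rightarrow> (real^'n \<Rightarrow> real) \<Rightarrow> bool" where
  "smooth_on U h \<longleftrightarrow> (\<forall>is. \<forall>x\<in>U. partials_iter is h differentiable (at x))"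

definition contravariant_metric :: "(real^'n::finite) set \<Rightarrow> (real^'n \<Rightarrow> real^'n^'n) \<Rightarrow> bool" where
  "contravariant_metric U g \<longleftrightarrow> open U \<and>
     (\<forall>x\<in>U. transpose (g x) = g x \<and> invertible (g x)) \<and>
     (\<forall>i j. smooth_on U (\<lambda>z. g z $ i $ j))"

definition lower :: "(real^'n::finite \<Rightarrow> real^'n^'n) \<Rightarrow> real^'n \<Rightarrow> real^'n^'n" where
  "lower g x = matrix_inv (g x)"

definition christoffel :: "(real^'n::finite \<Rightarrow> real^'n^'n) \<Rightarrow> 'n \<Rightarrow> 'n \<Rightarrow> 'n \<Rightarrow> real^'n \<Rightarrow> real" where
  "christoffel g k i j x = (1/2) * (\<Sum>l\<in>UNIV. g x $ k $ l *
      (partial i (\<lambda>z. lower g z $ j $ l) x + partial j (\<lambda>z. lower g z $ i $ l) x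
       - partial l (\<lambda>z. lower g z $ i $ j) x))"

text \<open>riemann g l i j k x = (R(d_j,d_k) d_i)^l, with R(X,Y)Z = nabla_X nabla_Y Z - nabla_Y nabla_X Z - nabla_[X,Y] Z.\<close>
definition riemann :: "(real^'n::finite \<Rightarrow> real^'n^'n) \<Rightarrow> 'n \<Rightarrow> 'n \<Rightarrow> 'n \<Rightarrow> 'n \<Rightarrow> real^'n \<Rightarrow> real" where
  "riemann g l i j k x =
     partial j (christoffel g l k i) x - partial k (christoffel g l j i) x
     + (\<Sum>m\<in>UNIV. christoffel g l j m x * christoffel g m k i x
                 - christoffel g l k m x * christoffel g m j i x)"

definition constant_curvature :: "(real^'n::finite) set \<Rightarrow> (real^'n \<Rightarrow> real^'n^'n) \<Rightarrow> real \<Rightarrow> bool" where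
  "constant_curvature U g K \<longleftrightarrow> contravariant_metric U g \<and>
     (\<forall>x\<in>U. \<forall>l i j k. riemann g l i j k x =
        K * (lower g x $ k $ i * (if l = j then 1 else 0) - lower g x $ j $ i * (if l = k then 1 else 0)))"

definition flat :: "(real^'n::finite) set \<Rightarrow> (real^'n \<Rightarrow> real^'n^'n) \<Rightarrow> bool" where
  "flat U g \<longleftrightarrow> constant_curvature U g 0"

definition nondegenerate :: "nat \<Rightarrow> (nat \<Rightarrow> nat \<Rightarrow> real) \<Rightarrow> bool" where
  "nondegenerate n G \<longleftrightarrow> (\<forall>c. (\<forall>j\<in>{1..n}. (\<Sum>i=1..n. c i * G i j) = 0) \<longrightarrow> (\<forall>i\<in>{1..n}. c i = 0))"

definition dU :: "((real^'a::finite) \<times> (real^'b::finite) \<Rightarrow> real) \<Rightarrow> real^'a \<Rightarrow> real^'b \<Rightarrow> real^'a" where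
  "dU F x y = dcov (\<lambda>x'. F (x', y)) x"

definition dV :: "((real^'a::finite) \<times> (real^'b::finite) \<Rightarrow> real) \<Rightarrow> real^'a \<Rightarrow> real^'b \<Rightarrow> real^'b" where
  "dV F x y = dcov (\<lambda>y'. F (x, y')) y"

definition warped_pair ::
  "(real^'a::finite \<Rightarrow> real^'a^'a) \<Rightarrow> (real^'b::finite \<Rightarrow> real^'b^'b) \<Rightarrow> (real^'a \<Rightarrow> real)
   \<Rightarrow> ((real^'a) \<times> (real^'b) \<Rightarrow> real) \<Rightarrow> ((real^'a) \<times> (real^'b) \<Rightarrow> real) \<Rightarrow> real^'a \<Rightarrow> real^'b \<Rightarrow> real" where
  "warped_pair g1 g2 f F H x y =
     pair_cov g1 x (dU F x y) (dU H x y) + (1 / (f x)^2) * pair_cov g2 y (dV F x y) (dV H x y)"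

definition warped_coords ::
  "nat \<Rightarrow> (nat \<Rightarrow> real^'a::finite \<Rightarrow> real) \<Rightarrow> (real^'a \<Rightarrow> real) \<Rightarrow> real \<Rightarrow> (real^'b::finite \<Rightarrow> real)
   \<Rightarrow> (nat \<Rightarrow> real^'b \<Rightarrow> real) \<Rightarrow> nat \<Rightarrow> (real^'a) \<times> (real^'b) \<Rightarrow> real" where
  "warped_coords p u f b \<phi> v a = (\<lambda>(x, y).
     if a < p then u a x
     else if a = p then u p x - b * f x * \<phi> y
     else f x * v (a - p) y)"

definition block_matrix :: "nat \<Rightarrow> (nat \<Rightarrow> nat \<Rightarrow> real) \<Rightarrow> (nat \<Rightarrow> nat \<Rightarrow> real) \<Rightarrow> nat \<Rightarrow> nat \<Rightarrow> real" where
  "block_matrix p G1 G2 a c =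
     (if a \<le> p \<and> c \<le> p then G1 a c
      else if p < a \<and> p < c then G2 (a - p) (c - p) else 0)"

end

theory Submission
  imports Defs
begin

text \<open>Every coordinate has the form \<open>w\<^sup>a(x, y) = U\<^sub>a(x) + f(x) \<Psi>\<^sub>a(y)\<close>, where
  \<open>U\<^sub>a = u\<^sup>a\<close> for \<open>a \<le> p\<close>, \<open>\<Psi>\<^sub>p = -b \<phi>\<close>, \<open>\<Psi>\<^sub>p\<^sub>+\<^sub>k = v\<^sup>k\<close>, and all other \<open>U\<^sub>a, \<Psi>\<^sub>a\<close> vanish. Along \<open>V\<close> the differential
  of \<open>f \<Psi>\<^sub>a\<close> is \<open>f d\<Psi>\<^sub>a\<close>, which cancels the factor \<open>f\<^sup>-\<^sup>2\<close> of the warped metric, so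
  \<open>g\<^sup>*(dw\<^sup>a, dw\<^sup>c)\<close> only involves the Gram values of \<open>u\<^sup>1 = f, \<dots>, u\<^sup>p\<close> on \<open>U\<close> and of
  \<open>\<phi>, v\<^sup>1, \<dots>, v\<^sup>n\<^sup>2\<close> on \<open>V\<close>. Since \<open>du\<^sup>a\<close> pairs with \<open>df\<close> (up to the curvature term) only
  for \<open>a = p\<close>, the mixed terms \<open>\<Psi>\<^sub>c g\<^sub>1\<^sup>*(dU\<^sub>a, df)\<close> contribute \<open>b \<Psi>\<^sub>c [a = p]\<close>; these cancel
  exactly the non-constant entries \<open>g\<^sub>2\<^sup>*(d\<Psi>\<^sub>p, d\<Psi>\<^sub>p) = 2b\<^sup>2\<phi>\<close> and \<open>g\<^sub>2\<^sup>*(d\<Psi>\<^sub>p, d\<Psi>\<^sub>p\<^sub>+\<^sub>k) = -b v\<^sup>k\<close>,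
  while the curvature terms recombine into \<open>-K\<^sub>1 w\<^sup>a w\<^sup>c\<close>.

  Only the symmetry of the metrics enters, not their curvature.\<close>

lemma smooth_on_imp_differentiable: "smooth_on S h \<Longrightarrow> z \<in> S \<Longrightarrow> h differentiable at z"
  unfolding smooth_on_def by (metis partials_iter.simps(1))

lemma dcov_eq_of_has_derivative: "(h has_derivative h') (at x) \<Longrightarrow> dcov h x = (\<chi> i. h' (axis i 1))"
  unfolding dcov_def partial_def using frechet_derivative_at by metis

lemma dcov_const [simp]: "dcov (\<lambda>z. c) x = 0"
  using dcov_eq_of_has_derivative[OF has_derivative_const] by (simp add: vec_eq_iff)

lemma dcov_linear_combination:
  assumes "h differentiable at x" "k differentiable at x"
  shows "dcov (\<lambda>z. \<alpha> * h z + \<beta> * k z) x = \<alpha> *\<^sub>R dcov h x + \<beta> *\<^sub>R dcov k x"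
proof -
  have "(h has_derivative frechet_derivative h (at x)) (at x)"
    and "(k has_derivative frechet_derivative k (at x)) (at x)"
    using assms frechet_derivative_works by blast+
  then have "((\<lambda>z. \<alpha> * h z + \<beta> * k z) has_derivative
      (\<lambda>v. \<alpha> * frechet_derivative h (at x) v + \<beta> * frechet_derivative k (at x) v)) (at x)"
    by (intro derivative_intros)
  from dcov_eq_of_has_derivative[OF this] show ?thesis
    by (simp add: vec_eq_iff dcov_def partial_def)
qed

lemma dcov_cmult: "h differentiable at x \<Longrightarrow> dcov (\<lambda>z. \<alpha> * h z) x = \<alpha> *\<^sub>R dcov h x"
  using dcov_linear_combination[of h x h \<alpha> 0] by simp

lemma dcov_cong_open:
  assumes "open S" "x \<in> S" "\<And>z. z \<in> S \<Longrightarrow> h z = k z" "k differentiable at x"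
  shows "dcov h x = dcov k x"
proof -
  have k: "(k has_derivative frechet_derivative k (at x)) (at x)"
    using assms(4) frechet_derivative_works by blast
  have "(h has_derivative frechet_derivative k (at x)) (at x)"
    by (rule has_derivative_transform_within_open[OF k assms(1,2)]) (use assms(3) in auto)
  with k show ?thesis by (simp add: dcov_eq_of_has_derivative)
qed

lemma pair_cov_add_left: "pair_cov g x (\<omega> + \<omega>') \<eta> = pair_cov g x \<omega> \<eta> + pair_cov g x \<omega>' \<eta>"
  unfolding pair_cov_def by (simp add: algebra_simps sum.distrib)

lemma pair_cov_add_right: "pair_cov g x \<eta> (\<omega> + \<omega>') = pair_cov g x \<eta> \<omega> + pair_cov g x \<eta> \<omega>'"
  unfolding pair_cov_def by (simp add: algebra_simps sum.distrib)

lemma pair_cov_scaleR_left: "pair_cov g x (c *\<^sub>R \<omega>) \<eta> = c * pair_cov g x \<omega> \<eta>"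
  unfolding pair_cov_def by (simp add: algebra_simps sum_distrib_left)

lemma pair_cov_scaleR_right: "pair_cov g x \<eta> (c *\<^sub>R \<omega>) = c * pair_cov g x \<eta> \<omega>"
  unfolding pair_cov_def by (simp add: algebra_simps sum_distrib_left)

lemma pair_cov_zero_left: "pair_cov g x 0 \<eta> = 0"
  unfolding pair_cov_def by simp

lemma pair_cov_zero_right: "pair_cov g x \<eta> 0 = 0"
  unfolding pair_cov_def by simp

lemma pair_cov_minus_left: "pair_cov g x (- \<omega>) \<eta> = - pair_cov g x \<omega> \<eta>"
  unfolding pair_cov_def by (simp add: sum_negf)

lemma pair_cov_minus_right: "pair_cov g x \<eta> (- \<omega>) = - pair_cov g x \<eta> \<omega>"
  unfolding pair_cov_def by (simp add: sum_negf)

lemmas pair_cov_bilinear = pair_cov_add_left pair_cov_add_right pair_cov_scaleR_left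
  pair_cov_scaleR_right pair_cov_zero_left pair_cov_zero_right pair_cov_minus_left pair_cov_minus_right

lemma pair_cov_commute:
  assumes "contravariant_metric U g" "x \<in> U"
  shows "pair_cov g x \<omega> \<eta> = pair_cov g x \<eta> \<omega>"
proof -
  have "transpose (g x) = g x"
    using assms unfolding contravariant_metric_def by blast
  then have "g x $ i $ j = g x $ j $ i" for i j
    by (metis transpose_def vec_lambda_beta)
  then show ?thesis
    unfolding pair_cov_def by (subst sum.swap) (simp add: mult.commute mult.left_commute)
qed

lemma warped_pair_base_fibre:
  assumes "A differentiable at x" "C differentiable at x" "f differentiable at x"
    and "B differentiable at y" "D differentiable at y" and "f x \<noteq> 0"
  shows "warped_pair g1 g2 f (\<lambda>(x, y). A x + f x * B y) (\<lambda>(x, y). C x + f x * D y) x y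
    = pair_cov g1 x (dcov A x) (dcov C x) + D y * pair_cov g1 x (dcov A x) (dcov f x)
      + B y * pair_cov g1 x (dcov f x) (dcov C x) + B y * D y * pair_cov g1 x (dcov f x) (dcov f x)
      + pair_cov g2 y (dcov B y) (dcov D y)"
proof -
  have dU: "dU (\<lambda>(x, y). E x + f x * F y) x y = dcov E x + F y *\<^sub>R dcov f x"
    if "E differentiable at x" for E F
    unfolding dU_def using dcov_linear_combination[OF that assms(3), of 1 "F y"]
    by (simp add: mult.commute)
  have dV: "dV (\<lambda>(x, y). E x + f x * F y) x y = f x *\<^sub>R dcov F y"
    if "F differentiable at y" for E F
    unfolding dV_def
    using dcov_linear_combination[OF differentiable_const that, of "E x" 1 "f x"] by simp
  show ?thesis
    unfolding warped_pair_def dU[OF assms(1)] dU[OF assms(2)] dV[OF assms(4)] dV[OF assms(5)]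
    using assms(6) by (simp add: pair_cov_bilinear field_simps power2_eq_square)
qed

definition base_part :: "nat \<Rightarrow> (nat \<Rightarrow> 'x \<Rightarrow> real) \<Rightarrow> nat \<Rightarrow> 'x \<Rightarrow> real" where
  "base_part p u a = (if a \<le> p then u a else (\<lambda>_. 0))"

definition fibre_part :: "nat \<Rightarrow> real \<Rightarrow> ('y \<Rightarrow> real) \<Rightarrow> (nat \<Rightarrow> 'y \<Rightarrow> real) \<Rightarrow> nat \<Rightarrow> 'y \<Rightarrow> real" where
  "fibre_part p b \<phi> v a = (if a < p then (\<lambda>_. 0) else if a = p then (\<lambda>y. - b * \<phi> y) else v (a - p))"

lemma warped_coords_base_fibre:
  "warped_coords p u f b \<phi> v a = (\<lambda>(x, y). base_part p u a x + f x * fibre_part p b \<phi> v a y)"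
  unfolding warped_coords_def base_part_def fibre_part_def by (auto simp: fun_eq_iff)

lemma base_part_differentiable:
  "\<forall>i\<in>{1..p}. u i differentiable at x \<Longrightarrow> 1 \<le> a \<Longrightarrow> base_part p u a differentiable at x"
  unfolding base_part_def by simp

lemma fibre_part_differentiable:
  assumes "\<phi> differentiable at y" "\<forall>k\<in>{1..n2}. v k differentiable at y" "a \<le> p + n2"
  shows "fibre_part p b \<phi> v a differentiable at y"
  using assms unfolding fibre_part_def by (auto intro: derivative_intros simp: le_diff_conv)

lemma base_part_gram:
  assumes gram: "\<forall>i\<in>{1..p}. \<forall>j\<in>{1..p}.
      pair_cov g x (dcov (u i) x) (dcov (u j) x) = G i j - K * u i x * u j x"
    and "1 \<le> a" "1 \<le> c"
  shows "pair_cov g x (dcov (base_part p u a) x) (dcov (base_part p u c) x)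
    = block_matrix p G (\<lambda>_ _. 0) a c - K * base_part p u a x * base_part p u c x"
  using assms unfolding base_part_def block_matrix_def by (simp add: pair_cov_bilinear)

lemma fibre_part_gram:
  assumes metric: "contravariant_metric V g" "y \<in> V"
    and \<phi>_diff: "\<phi> differentiable at y"
    and v_gram: "\<forall>k\<in>{1..n2}. \<forall>m\<in>{1..n2}. pair_cov g y (dcov (v k) y) (dcov (v m) y) = G k m"
    and \<phi>_v: "\<forall>k\<in>{1..n2}. pair_cov g y (dcov \<phi> y) (dcov (v k) y) = v k y"
    and \<phi>_norm: "pair_cov g y (dcov \<phi> y) (dcov \<phi> y) = 2 * \<phi> y"
    and "a \<le> p + n2" "c \<le> p + n2"
  shows "pair_cov g y (dcov (fibre_part p b \<phi> v a) y) (dcov (fibre_part p b \<phi> v c) y)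
    = block_matrix p (\<lambda>_ _. 0) G a c
      - b * ((if a = p then fibre_part p b \<phi> v c y else 0) + (if c = p then fibre_part p b \<phi> v a y else 0))"
proof -
  have v_\<phi>: "\<forall>k\<in>{1..n2}. pair_cov g y (dcov (v k) y) (dcov \<phi> y) = v k y"
    using \<phi>_v pair_cov_commute[OF metric] by metis
  have "dcov (\<lambda>y. - b * \<phi> y) y = (- b) *\<^sub>R dcov \<phi> y"
    by (rule dcov_cmult[OF \<phi>_diff])
  then have "dcov (fibre_part p b \<phi> v a) y
      = (if a < p then 0 else if a = p then (- b) *\<^sub>R dcov \<phi> y else dcov (v (a - p)) y)" for a
    unfolding fibre_part_def by simp
  then show ?thesis
    using assms v_\<phi> unfolding fibre_part_def block_matrix_def
    by (auto simp: pair_cov_bilinear le_diff_conv algebra_simps)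
qed

lemma base_part_pair_first_coordinate:
  assumes metric: "contravariant_metric U g" "x \<in> U"
    and gram: "\<forall>i\<in>{1..p}. \<forall>j\<in>{1..p}.
      pair_cov g x (dcov (u i) x) (dcov (u j) x) = G i j - K * u i x * u j x"
    and row: "\<forall>j\<in>{1..p}. j \<noteq> p \<longrightarrow> G 1 j = 0" "G 1 p = b"
    and "1 \<le> p" "1 \<le> a"
  shows "pair_cov g x (dcov (u 1) x) (dcov (base_part p u a) x)
      = (if a = p then b else 0) - K * u 1 x * base_part p u a x"
    and "pair_cov g x (dcov (base_part p u a) x) (dcov (u 1) x)
      = (if a = p then b else 0) - K * base_part p u a x * u 1 x"
proof -
  show first: "pair_cov g x (dcov (u 1) x) (dcov (base_part p u a) x)
      = (if a = p then b else 0) - K * u 1 x * base_part p u a x"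
    using gram row \<open>1 \<le> p\<close> \<open>1 \<le> a\<close> by (auto simp: base_part_def pair_cov_bilinear)
  then show "pair_cov g x (dcov (base_part p u a) x) (dcov (u 1) x)
      = (if a = p then b else 0) - K * base_part p u a x * u 1 x"
    by (simp add: pair_cov_commute[OF metric] mult.commute)
qed

lemma warped_pair_warped_coords:
  assumes "\<forall>i\<in>{1..p}. u i differentiable at x" "f differentiable at x" "f x \<noteq> 0"
    and "\<phi> differentiable at y" "\<forall>k\<in>{1..n2}. v k differentiable at y"
    and "a \<in> {1..p + n2}" "c \<in> {1..p + n2}"
  shows "warped_pair g1 g2 f (warped_coords p u f b \<phi> v a) (warped_coords p u f b \<phi> v c) x y
    = pair_cov g1 x (dcov (base_part p u a) x) (dcov (base_part p u c) x)
      + fibre_part p b \<phi> v c y * pair_cov g1 x (dcov (base_part p u a) x) (dcov f x)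
      + fibre_part p b \<phi> v a y * pair_cov g1 x (dcov f x) (dcov (base_part p u c) x)
      + fibre_part p b \<phi> v a y * fibre_part p b \<phi> v c y * pair_cov g1 x (dcov f x) (dcov f x)
      + pair_cov g2 y (dcov (fibre_part p b \<phi> v a) y) (dcov (fibre_part p b \<phi> v c) y)"
  unfolding warped_coords_base_fibre using assms
  by (intro warped_pair_base_fibre base_part_differentiable fibre_part_differentiable) auto

lemma block_matrix_split:
  "block_matrix p G1 G2 a c = block_matrix p G1 (\<lambda>_ _. 0) a c + block_matrix p (\<lambda>_ _. 0) G2 a c"
  unfolding block_matrix_def by simp

theorem proposition4p2:
  fixes U :: "(real^'a::finite) set" and V :: "(real^'b::finite) set"
    and g1 :: "real^'a \<Rightarrow> real^'a^'a" and g2 :: "real^'b \<Rightarrow> real^'b^'b"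
    and K1 b :: real and f :: "real^'a \<Rightarrow> real"
    and p n2 :: nat and u :: "nat \<Rightarrow> real^'a \<Rightarrow> real" and G1 G2 :: "nat \<Rightarrow> nat \<Rightarrow> real"
    and v :: "nat \<Rightarrow> real^'b \<Rightarrow> real" and \<phi> :: "real^'b \<Rightarrow> real"
  assumes curv1: "constant_curvature U g1 K1"
    and flat2: "flat V g2"
    and f_smooth: "smooth_on U f" and f_nz: "\<forall>x\<in>U. f x \<noteq> 0"
    and p_pos: "1 \<le> p"
    and u_smooth: "\<forall>i\<in>{1..p}. smooth_on U (u i)"
    and u_gram: "\<forall>i\<in>{1..p}. \<forall>j\<in>{1..p}. \<forall>x\<in>U.
        pair_cov g1 x (dcov (u i) x) (dcov (u j) x) = G1 i j - K1 * u i x * u j x"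
    and G1_nd: "nondegenerate p G1"
    and f_u1: "\<forall>x\<in>U. f x = u 1 x"
    and G1_row: "\<forall>j\<in>{1..p}. j \<noteq> p \<longrightarrow> G1 1 j = 0"
    and G1_1p: "G1 1 p = b" and b_nz: "b \<noteq> 0"
    and f_norm: "\<forall>x\<in>U. pair_cov g1 x (dcov f x) (dcov f x) = - K1 * (f x)^2"
    and v_smooth: "\<forall>k\<in>{1..n2}. smooth_on V (v k)"
    and v_gram: "\<forall>k\<in>{1..n2}. \<forall>m\<in>{1..n2}. \<forall>y\<in>V.
        pair_cov g2 y (dcov (v k) y) (dcov (v m) y) = G2 k m"
    and G2_nd: "nondegenerate n2 G2"
    and phi_smooth: "smooth_on V \<phi>"
    and phi_v: "\<forall>i\<in>{1..n2}. \<forall>y\<in>V. pair_cov g2 y (dcov \<phi> y) (dcov (v i) y) = v i y"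
    and phi_norm: "\<forall>y\<in>V. pair_cov g2 y (dcov \<phi> y) (dcov \<phi> y) = 2 * \<phi> y"
  shows "\<forall>a\<in>{1..p+n2}. \<forall>c\<in>{1..p+n2}. \<forall>x\<in>U. \<forall>y\<in>V.
    warped_pair g1 g2 f (warped_coords p u f b \<phi> v a) (warped_coords p u f b \<phi> v c) x y
      = block_matrix p G1 G2 a c
        - K1 * warped_coords p u f b \<phi> v a (x, y) * warped_coords p u f b \<phi> v c (x, y)"
proof (intro ballI)
  fix a c x y
  assume a: "a \<in> {1..p+n2}" and c: "c \<in> {1..p+n2}" and x: "x \<in> U" and y: "y \<in> V"
  have metric1: "contravariant_metric U g1" and metric2: "contravariant_metric V g2"
    using curv1 flat2 unfolding flat_def constant_curvature_def by blast+
  have u_diff: "\<forall>i\<in>{1..p}. u i differentiable at x" and v_diff: "\<forall>k\<in>{1..n2}. v k differentiable at y"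
    and f_diff: "f differentiable at x" and \<phi>_diff: "\<phi> differentiable at y"
    using u_smooth v_smooth f_smooth phi_smooth x y smooth_on_imp_differentiable by blast+
  have gram: "\<forall>i\<in>{1..p}. \<forall>j\<in>{1..p}.
      pair_cov g1 x (dcov (u i) x) (dcov (u j) x) = G1 i j - K1 * u i x * u j x"
    using u_gram x by blast
  have f_eq: "f x = u 1 x" and df_eq: "dcov f x = dcov (u 1) x"
    using f_u1 x p_pos u_diff metric1 dcov_cong_open[of U x f "u 1"]
    by (auto simp: contravariant_metric_def)
  have a1: "1 \<le> a" "a \<le> p + n2" and c1: "1 \<le> c" "c \<le> p + n2"
    using a c by auto
  note first = base_part_pair_first_coordinate[OF metric1 x gram G1_row G1_1p p_pos]
  have fibre: "pair_cov g2 y (dcov (fibre_part p b \<phi> v a) y) (dcov (fibre_part p b \<phi> v c) y)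
    = block_matrix p (\<lambda>_ _. 0) G2 a c
      - b * ((if a = p then fibre_part p b \<phi> v c y else 0) + (if c = p then fibre_part p b \<phi> v a y else 0))"
    using v_gram phi_v phi_norm y a1 c1 by (intro fibre_part_gram[OF metric2 y \<phi>_diff]) auto
  have f_null: "pair_cov g1 x (dcov f x) (dcov f x) = - K1 * (f x)^2"
    using f_norm x by blast
  show "warped_pair g1 g2 f (warped_coords p u f b \<phi> v a) (warped_coords p u f b \<phi> v c) x y
      = block_matrix p G1 G2 a c
        - K1 * warped_coords p u f b \<phi> v a (x, y) * warped_coords p u f b \<phi> v c (x, y)"
    unfolding warped_pair_warped_coords[OF u_diff f_diff f_nz[rule_format, OF x] \<phi>_diff v_diff a c]
    unfolding fibre f_null block_matrix_split[of p G1 G2] warped_coords_base_fibre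
      base_part_gram[OF gram a1(1) c1(1)]
      first(1)[OF c1(1), folded df_eq f_eq] first(2)[OF a1(1), folded df_eq f_eq]
    by (cases "a = p"; cases "c = p") (simp_all add: algebra_simps power2_eq_square)
qed

end
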